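(* For every integer $n\ge 2$, let $\mathcal{A}_n$ denote the set of Dyck $n$-paths whose terminal descent has even length and all of whose other descents to ground level (if any) have odd length. Then $|\mathcal{A}_n| = C_{n-1}$, where $C_m=\frac{1}{m+1}\binom{2m}{m}$ is the $m$-th Catalan number.
   Context: A Dyck $n$-path is a lattice path consisting of $n$ upsteps $U=(1,1)$ and $n$ downsteps $D=(1,-1)$ that starts and ends at height $0$ (ground level) and never goes below ground level. A descent is a maximal run of consecutive downsteps; its length is the number of downsteps in it. The terminal descent is the descent that ends at the final point of the path. A return is a downstep ending at ground level, and a descent to ground level is a descent whose last step is a return. *)

theory Defs
  imports Main
begin

text \<open>A lattice path is a list of steps: True = upstep U = (1,1), False = downstep D = (1,-1).\<close>

definition step_val :: "bool \<Rightarrow> int" where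
  "step_val s = (if s then 1 else -1)"

definition height :: "bool list \<Rightarrow> nat \<Rightarrow> int" where
  "height p k = sum_list (map step_val (take k p))"

definition dyck_path :: "nat \<Rightarrow> bool list \<Rightarrow> bool" where
  "dyck_path n p \<longleftrightarrow>
     length (filter (\<lambda>s. s) p) = n \<and> length (filter (\<lambda>s. \<not> s) p) = n \<and>
     (\<forall>k \<le> length p. height p k \<ge> 0) \<and> height p (length p) = 0"

definition dyck_paths :: "nat \<Rightarrow> bool list set" where
  "dyck_paths n = {p. dyck_path n p}"

text \<open>A descent is a maximal run of consecutive downsteps, occupying step positions
  i, ..., j-1 (0-based); its length is j - i.\<close>
definition is_descent :: "bool list \<Rightarrow> nat \<Rightarrow> nat \<Rightarrow> bool" where
  "is_descent p i j \<longleftrightarrow> i < j \<and> j \<le> length p \<and>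
     (\<forall>k. i \<le> k \<and> k < j \<longrightarrow> \<not> p ! k) \<and>
     (i = 0 \<or> p ! (i - 1)) \<and>
     (j = length p \<or> p ! j)"

definition is_terminal_descent :: "bool list \<Rightarrow> nat \<Rightarrow> nat \<Rightarrow> bool" where
  "is_terminal_descent p i j \<longleftrightarrow> is_descent p i j \<and> j = length p"

definition is_ground_descent :: "bool list \<Rightarrow> nat \<Rightarrow> nat \<Rightarrow> bool" where
  "is_ground_descent p i j \<longleftrightarrow> is_descent p i j \<and> height p j = 0"

definition A_set :: "nat \<Rightarrow> bool list set" where
  "A_set n = {p \<in> dyck_paths n.
      (\<exists>i. is_terminal_descent p i (length p) \<and> even (length p - i)) \<and>
      (\<forall>i j. is_ground_descent p i j \<and> j \<noteq> length p \<longrightarrow> odd (j - i))}"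

definition catalan :: "nat \<Rightarrow> nat" where
  "catalan m = ((2 * m) choose m) div (m + 1)"

end

theory Submission
  imports Defs
begin

text \<open>
  A nonempty Dyck path factors uniquely as U a D r with a and r Dyck paths (first return to
  ground level). The ground descents of U a D r are the descent closing U a D, whose length is one
  more than the number of trailing downsteps of a, and the ground descents of r. Hence U a D r lies
  in A exactly when either r is empty and a ends in an odd run of downsteps, or a ends in an even
  run and r lies in A. Deleting the first U together with its matching D is therefore a bijection
  from A_n onto the Dyck (n-1)-paths: a path x ending in an odd run comes from U x D, and a path
  ending in an even run splits in exactly one way as x = e r with e ending in an even run (possibly
  e empty) and r in A, and comes from U e D r. Finally, the Dyck m-paths are counted as ballot
  paths: there are binom(a+b, b) - binom(a+b, a+1) paths with a upsteps and b downsteps that never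
  go below ground level.
\<close>

section \<open>Dyck paths and the first-return decomposition\<close>

definition end_height :: "bool list \<Rightarrow> int" where
  "end_height p = sum_list (map step_val p)"

lemma end_height_Nil [simp]: "end_height [] = 0"
  by (simp add: end_height_def)

lemma end_height_Cons [simp]: "end_height (s # p) = step_val s + end_height p"
  by (simp add: end_height_def)

lemma end_height_append [simp]: "end_height (p @ q) = end_height p + end_height q"
  by (simp add: end_height_def)

lemma end_height_eq_count:
  "end_height p = int (length (filter (\<lambda>s. s) p)) - int (length (filter (\<lambda>s. \<not> s) p))"
  by (induction p) (auto simp: step_val_def)

lemma height_eq_end_height_take: "height p k = end_height (take k p)"
  by (simp add: height_def end_height_def)

lemma height_0 [simp]: "height p 0 = 0"
  by (simp add: height_eq_end_height_take)

lemma height_length: "height p (length p) = end_height p"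
  by (simp add: height_eq_end_height_take)

lemma height_Cons: "height (s # p) k = (if k = 0 then 0 else step_val s + height p (k - 1))"
  by (cases k) (simp_all add: height_eq_end_height_take)

lemma height_append:
  "height (p @ q) k = (if k \<le> length p then height p k else end_height p + height q (k - length p))"
  by (simp add: height_eq_end_height_take)

definition dyck :: "bool list \<Rightarrow> bool" where
  "dyck p \<longleftrightarrow> (\<forall>k \<le> length p. 0 \<le> height p k) \<and> end_height p = 0"

lemma dyck_path_iff: "dyck_path n p \<longleftrightarrow> dyck p \<and> length p = 2 * n"
proof -
  let ?u = "length (filter (\<lambda>s. s) p)" and ?d = "length (filter (\<lambda>s. \<not> s) p)"
  have "?u + ?d = length p"
    by (rule sum_length_filter_compl)
  moreover have "end_height p = 0 \<longleftrightarrow> ?u = ?d"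
    by (simp add: end_height_eq_count)
  ultimately have "?u = n \<and> ?d = n \<and> end_height p = 0 \<longleftrightarrow> end_height p = 0 \<and> length p = 2 * n"
    by linarith
  then show ?thesis
    unfolding dyck_path_def dyck_def height_length by blast
qed

lemma dyck_Nil [simp]: "dyck []"
  by (simp add: dyck_def)

lemma dyck_append: "dyck p \<Longrightarrow> dyck q \<Longrightarrow> dyck (p @ q)"
  unfolding dyck_def by (auto simp: height_append)

lemma dyck_wrap: "dyck a \<Longrightarrow> dyck (True # a @ [False])"
  unfolding dyck_def by (auto simp: height_append height_Cons step_val_def)

lemma dyck_wrap_append: "dyck a \<Longrightarrow> dyck r \<Longrightarrow> dyck (True # a @ False # r)"
  using dyck_append[OF dyck_wrap] by fastforce

lemma height_wrap_pos:
  assumes "dyck a" "0 < j" "j \<le> Suc (length a)"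
  shows "0 < height (True # a @ [False]) j"
proof -
  have "j - 1 \<le> length a"
    using assms(3) by simp
  then have "height (True # a @ [False]) j = 1 + height a (j - 1)"
    using assms(2) by (simp add: height_Cons height_append step_val_def)
  moreover have "0 \<le> height a (j - 1)"
    using assms(1,3) unfolding dyck_def by simp
  ultimately show ?thesis
    by simp
qed

lemma dyck_append_cancel_left:
  assumes "dyck p" "dyck (p @ q)"
  shows "dyck q"
  unfolding dyck_def
proof safe
  fix k assume "k \<le> length q"
  then have "0 \<le> height (p @ q) (length p + k)"
    using assms(2) unfolding dyck_def by auto
  then show "0 \<le> height q k"
    using assms(1) unfolding dyck_def by (cases "k = 0") (simp_all add: height_append)
next
  show "end_height q = 0"
    using assms unfolding dyck_def by simp
qed

lemma dyck_hd:
  assumes "dyck p" "p \<noteq> []"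
  shows "hd p"
proof -
  have "0 \<le> height p 1"
    using assms unfolding dyck_def by (cases p) auto
  then show ?thesis
    using assms(2) by (cases p) (auto simp: height_Cons step_val_def split: if_splits)
qed

lemma dyck_True_in_set: "dyck p \<Longrightarrow> p \<noteq> [] \<Longrightarrow> True \<in> set p"
  by (metis dyck_hd hd_in_set)

lemma dyck_last: "dyck p \<Longrightarrow> p \<noteq> [] \<Longrightarrow> \<not> last p"
proof (induction p rule: rev_induct)
  case (snoc s p)
  then have "0 \<le> height (p @ [s]) (length p)" "end_height (p @ [s]) = 0"
    unfolding dyck_def by auto
  then show ?case by (simp add: height_append height_length step_val_def split: if_splits)
qed simp

lemma neg_end_height_split:
  "end_height w < 0 \<Longrightarrow> \<exists>a s. w = a @ False # s \<and> dyck a"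
proof (induction "length w" arbitrary: w rule: less_induct)
  case less
  then obtain c w' where w: "w = c # w'"
    by (cases w) auto
  show ?case
  proof (cases c)
    case False
    then show ?thesis using w by force
  next
    case True
    then have "end_height w' < 0"
      using less.prems w by (simp add: step_val_def)
    then obtain a1 s1 where 1: "w' = a1 @ False # s1" "dyck a1"
      using less.hyps[of w'] w by auto
    then have "end_height s1 < 0"
      using less.prems w True by (simp add: dyck_def step_val_def)
    then obtain a2 s where 2: "s1 = a2 @ False # s" "dyck a2"
      using less.hyps[of s1] w 1 by auto
    have "w = (True # a1 @ False # a2) @ False # s"
      using w True 1 2 by simp
    then show ?thesis
      using dyck_wrap_append[OF 1(2) 2(2)] by blast
  qed
qed

lemma dyck_first_return:
  assumes "dyck p" "p \<noteq> []"
  obtains a r where "p = True # a @ False # r" "dyck a" "dyck r"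
proof -
  obtain w where p: "p = True # w"
    using dyck_hd[OF assms] assms(2) by (cases p) auto
  then have "end_height w < 0"
    using assms(1) by (simp add: dyck_def step_val_def)
  then obtain a r where w: "w = a @ False # r" "dyck a"
    using neg_end_height_split by blast
  then have "dyck r"
    using dyck_append_cancel_left[OF dyck_wrap[OF w(2)]] assms(1) p by simp
  then show ?thesis
    using that p w by blast
qed

lemma dyck_not_append_False:
  assumes "dyck a"
  shows "\<not> dyck (a @ False # u)"
proof
  assume "dyck (a @ False # u)"
  then have "0 \<le> height (a @ False # u) (Suc (length a))"
    unfolding dyck_def by auto
  then show False
    using assms unfolding dyck_def by (simp add: height_append height_Cons step_val_def)
qed

lemma dyck_first_return_unique:
  assumes "dyck a" "dyck b" "a @ False # r = b @ False # s"
  shows "a = b \<and> r = s"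
proof -
  obtain us where
    "a = b @ us \<and> us @ False # r = False # s \<or> a @ us = b \<and> False # r = us @ False # s"
    using assms(3) by (auto simp: append_eq_append_conv2)
  then show ?thesis
    using assms(1,2) dyck_not_append_False by (cases us) auto
qed

section \<open>Trailing downsteps and descents\<close>

definition trailing_downs :: "bool list \<Rightarrow> nat" where
  "trailing_downs p = length (takeWhile Not (rev p))"

lemma trailing_downs_snoc_False [simp]: "trailing_downs (p @ [False]) = Suc (trailing_downs p)"
  by (simp add: trailing_downs_def)

lemma trailing_downs_Cons_True [simp]: "trailing_downs (True # p) = trailing_downs p"
  by (simp add: trailing_downs_def takeWhile_append) (metis length_rev set_rev takeWhile_eq_all_conv)

lemma trailing_downs_append: "True \<in> set q \<Longrightarrow> trailing_downs (p @ q) = trailing_downs q"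
  unfolding trailing_downs_def by (subst rev_append, subst takeWhile_append1[of True]) auto

lemma trailing_downs_le_length: "trailing_downs p \<le> length p"
  unfolding trailing_downs_def by (metis length_rev length_takeWhile_le)

lemma trailing_downs_split:
  obtains w where "p = w @ replicate (trailing_downs p) False" "w = [] \<or> last w"
proof -
  define w where "w = rev (dropWhile Not (rev p))"
  have "takeWhile Not (rev p) = replicate (trailing_downs p) False"
    unfolding trailing_downs_def by (metis (full_types) replicate_length_same set_takeWhileD)
  then have "rev p = replicate (trailing_downs p) False @ dropWhile Not (rev p)"
    by (metis takeWhile_dropWhile_id)
  then have "p = w @ replicate (trailing_downs p) False"
    unfolding w_def by (metis rev_append rev_replicate rev_rev_ident)
  moreover have "w = [] \<or> last w"
    unfolding w_def by (metis (full_types) hd_dropWhile last_rev rev_is_Nil_conv)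
  ultimately show ?thesis
    using that by blast
qed

lemma is_descent_bounds: "is_descent p i j \<Longrightarrow> i < j \<and> j \<le> length p"
  by (simp add: is_descent_def)

lemma is_descent_to_end_iff:
  assumes "p \<noteq> []" "\<not> last p"
  shows "is_descent p i (length p) \<longleftrightarrow> i = length p - trailing_downs p"
proof -
  define t where "t = trailing_downs p"
  obtain w where p: "p = w @ replicate t False" and w: "w = [] \<or> last w"
    unfolding t_def by (rule trailing_downs_split)
  have "0 < t"
    using assms p w by (cases t) auto
  have L: "length p = length w + t"
    using p by simp
  show ?thesis
    unfolding t_def[symmetric]
  proof
    assume d: "is_descent p i (length p)"
    have "\<not> i < length w"
    proof
      assume "i < length w"
      then have "i \<le> length w - 1" "length w - 1 < length p"
        using L by auto
      then have "\<not> p ! (length w - 1)"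
        using d unfolding is_descent_def by blast
      moreover have "w \<noteq> []"
        using \<open>i < length w\<close> by auto
      ultimately show False
        using w p by (simp add: nth_append last_conv_nth)
    qed
    moreover have "\<not> length w < i"
    proof
      assume "length w < i"
      then have "p ! (i - 1)" "i - 1 < length p"
        using d unfolding is_descent_def by auto
      moreover have "length w \<le> i - 1"
        using \<open>length w < i\<close> by linarith
      ultimately show False
        using p by (simp add: nth_append)
    qed
    ultimately show "i = length p - t"
      using L by simp
  next
    assume "i = length p - t"
    then show "is_descent p i (length p)"
      using \<open>0 < t\<close> w p L unfolding is_descent_def
      by (cases "w = []") (auto simp: nth_append last_conv_nth)
  qed
qed

lemma is_descent_append_left:
  assumes "j \<le> length p" "q = [] \<or> hd q"
  shows "is_descent (p @ q) i j \<longleftrightarrow> is_descent p i j"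
  using assms unfolding is_descent_def by (cases q) (auto simp: nth_append)

lemma is_descent_append_right:
  assumes "q \<noteq> []" "hd q"
  shows "is_descent (p @ q) (i + length p) (j + length p) \<longleftrightarrow> is_descent q i j"
proof (cases "i = 0")
  case True
  then show ?thesis
    using assms unfolding is_descent_def by (cases q) (auto simp: nth_append)
next
  case False
  have "(\<forall>k. i + length p \<le> k \<and> k < j + length p \<longrightarrow> \<not> (p @ q) ! k) \<longleftrightarrow>
        (\<forall>k. i \<le> k \<and> k < j \<longrightarrow> \<not> q ! k)"
  proof safe
    fix k
    assume "\<forall>k. i + length p \<le> k \<and> k < j + length p \<longrightarrow> \<not> (p @ q) ! k" "i \<le> k" "k < j" "q ! k"
    then have "\<not> (p @ q) ! (length p + k)"
      by (simp add: add.commute)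
    with \<open>q ! k\<close> show False
      by simp
  next
    fix k
    assume H: "\<forall>k. i \<le> k \<and> k < j \<longrightarrow> \<not> q ! k" "i + length p \<le> k" "k < j + length p" "(p @ q) ! k"
    have "i \<le> k - length p" "k - length p < j"
      using H(2,3) by linarith+
    then have "\<not> q ! (k - length p)"
      using H(1) by blast
    with H(2,4) show False
      by (simp add: nth_append)
  qed
  moreover have "(p @ q) ! (i + length p - 1) = q ! (i - 1)"
  proof -
    have "i + length p - 1 = length p + (i - 1)"
      using False by simp
    then show ?thesis
      by simp
  qed
  ultimately show ?thesis
    using False unfolding is_descent_def by (simp add: nth_append)
qed

lemma is_descent_append_cases:
  assumes "q \<noteq> []" "hd q" "is_descent (p @ q) i j"
  shows "j \<le> length p \<or> length p < i"
proof (rule ccontr)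
  assume "\<not> ?thesis"
  then have "\<not> (p @ q) ! length p"
    using assms(3) unfolding is_descent_def by auto
  then show False
    using assms(1,2) by (simp add: nth_append hd_conv_nth)
qed

section \<open>Admissible paths\<close>

definition even_terminal_descent :: "bool list \<Rightarrow> bool" where
  "even_terminal_descent p \<longleftrightarrow> (\<exists>i. is_terminal_descent p i (length p) \<and> even (length p - i))"

definition odd_ground_descents :: "bool list \<Rightarrow> bool" where
  "odd_ground_descents p \<longleftrightarrow> (\<forall>i j. is_ground_descent p i j \<and> j \<noteq> length p \<longrightarrow> odd (j - i))"

definition admissible :: "bool list \<Rightarrow> bool" where
  "admissible p \<longleftrightarrow> even_terminal_descent p \<and> odd_ground_descents p"

lemma A_set_eq: "A_set n = {p. dyck p \<and> length p = 2 * n \<and> admissible p}"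
  unfolding A_set_def dyck_paths_def admissible_def even_terminal_descent_def odd_ground_descents_def
  by (auto simp: dyck_path_iff)

lemma even_terminal_descent_iff:
  assumes "p \<noteq> []" "\<not> last p"
  shows "even_terminal_descent p \<longleftrightarrow> even (trailing_downs p)"
  using is_descent_to_end_iff[OF assms] trailing_downs_le_length[of p]
  unfolding even_terminal_descent_def is_terminal_descent_def by auto

lemma is_ground_descent_append_left:
  assumes "j \<le> length p" "q = [] \<or> hd q"
  shows "is_ground_descent (p @ q) i j \<longleftrightarrow> is_ground_descent p i j"
  using is_descent_append_left[OF assms] assms(1) unfolding is_ground_descent_def
  by (simp add: height_append)

lemma is_ground_descent_append_right:
  assumes "end_height p = 0" "q \<noteq> []" "hd q"
  shows "is_ground_descent (p @ q) (i + length p) (j + length p) \<longleftrightarrow> is_ground_descent q i j"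
proof -
  have "height (p @ q) (j + length p) = height q j"
    using assms(1) by (cases j) (simp_all add: height_append height_length)
  then show ?thesis
    using is_descent_append_right[OF assms(2,3)] unfolding is_ground_descent_def by simp
qed

lemma is_ground_descent_at_split:
  assumes "dyck p" "p \<noteq> []" "q = [] \<or> hd q"
  shows "is_ground_descent (p @ q) i (length p) \<longleftrightarrow> i = length p - trailing_downs p"
  using is_ground_descent_append_left[OF _ assms(3)] is_descent_to_end_iff[OF assms(2) dyck_last[OF assms(1,2)]]
    assms(1) unfolding is_ground_descent_def dyck_def by (simp add: height_length)

lemma is_ground_descent_append_iff:
  assumes "dyck p" "dyck q" "p \<noteq> []" "q \<noteq> []"
  shows "is_ground_descent (p @ q) i j \<longleftrightarrow>
    j < length p \<and> is_ground_descent p i j \<or>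
    j = length p \<and> i = length p - trailing_downs p \<or>
    (\<exists>i' j'. i = i' + length p \<and> j = j' + length p \<and> is_ground_descent q i' j')"
proof -
  have hq: "hd q" and ep: "end_height p = 0"
    using dyck_hd[OF assms(2,4)] assms(1) unfolding dyck_def by auto
  note left = is_ground_descent_append_left[OF _ disjI2[OF hq]]
  note right = is_ground_descent_append_right[OF ep assms(4) hq]
  note split = is_ground_descent_at_split[OF assms(1,3) disjI2[OF hq]]
  show ?thesis
  proof
    assume G: "is_ground_descent (p @ q) i j"
    then have "is_descent (p @ q) i j"
      unfolding is_ground_descent_def by blast
    then have "j \<le> length p \<or> length p < i" "i < j"
      using is_descent_append_cases[OF assms(4) hq] is_descent_bounds by blast+
    then consider "j < length p" | "j = length p" | "length p < i"
      by linarith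
    then show "j < length p \<and> is_ground_descent p i j \<or>
      j = length p \<and> i = length p - trailing_downs p \<or>
      (\<exists>i' j'. i = i' + length p \<and> j = j' + length p \<and> is_ground_descent q i' j')"
    proof cases
      case 1
      then show ?thesis
        using G left[of j p i] by simp
    next
      case 2
      then show ?thesis
        using G split by simp
    next
      case 3
      define i' j' where "i' = i - length p" and "j' = j - length p"
      have "i = i' + length p" "j = j' + length p"
        using 3 \<open>i < j\<close> by (simp_all add: i'_def j'_def)
      then show ?thesis
        using G right[of i' j'] by blast
    qed
  next
    show "is_ground_descent (p @ q) i j" if "j < length p \<and> is_ground_descent p i j \<or>
      j = length p \<and> i = length p - trailing_downs p \<or>
      (\<exists>i' j'. i = i' + length p \<and> j = j' + length p \<and> is_ground_descent q i' j')"
      using that left[of j p i] split right by auto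
  qed
qed

lemma odd_ground_descents_appendD:
  assumes "dyck p" "dyck q" "p \<noteq> []" "q \<noteq> []" "odd_ground_descents (p @ q)"
  shows "odd_ground_descents p" "odd (trailing_downs p)" "odd_ground_descents q"
proof -
  note ground = is_ground_descent_append_iff[OF assms(1-4)]
  note H = assms(5)[unfolded odd_ground_descents_def, rule_format]
  show "odd_ground_descents p"
    unfolding odd_ground_descents_def
  proof (intro allI impI)
    fix i j
    assume G: "is_ground_descent p i j \<and> j \<noteq> length p"
    then have "j < length p"
      using is_descent_bounds unfolding is_ground_descent_def by fastforce
    with G have "is_ground_descent (p @ q) i j \<and> j \<noteq> length (p @ q)"
      using ground[of i j] by simp
    then show "odd (j - i)"
      by (rule H)
  qed
  have "is_ground_descent (p @ q) (length p - trailing_downs p) (length p) \<and>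
      length p \<noteq> length (p @ q)"
    using ground assms(4) by simp
  then have "odd (length p - (length p - trailing_downs p))"
    by (rule H)
  then show "odd (trailing_downs p)"
    using trailing_downs_le_length[of p] by simp
  show "odd_ground_descents q"
    unfolding odd_ground_descents_def
  proof (intro allI impI)
    fix i j
    assume "is_ground_descent q i j \<and> j \<noteq> length q"
    then have "is_ground_descent (p @ q) (i + length p) (j + length p) \<and>
        j + length p \<noteq> length (p @ q)"
      using ground[of "i + length p" "j + length p"] by simp
    then have "odd (j + length p - (i + length p))"
      by (rule H)
    then show "odd (j - i)"
      by simp
  qed
qed

lemma odd_ground_descents_appendI:
  assumes "dyck p" "dyck q" "p \<noteq> []" "q \<noteq> []"
    and "odd_ground_descents p" "odd (trailing_downs p)" "odd_ground_descents q"
  shows "odd_ground_descents (p @ q)"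
  unfolding odd_ground_descents_def
proof (intro allI impI)
  fix i j
  assume G: "is_ground_descent (p @ q) i j \<and> j \<noteq> length (p @ q)"
  then consider "j < length p" "is_ground_descent p i j"
    | "j = length p" "i = length p - trailing_downs p"
    | i' j' where "i = i' + length p" "j = j' + length p" "is_ground_descent q i' j'"
    using is_ground_descent_append_iff[OF assms(1-4)] by blast
  then show "odd (j - i)"
  proof cases
    case 1
    then show ?thesis
      using assms(5) unfolding odd_ground_descents_def by blast
  next
    case 2
    then show ?thesis
      using assms(6) trailing_downs_le_length[of p] by simp
  next
    case (3 i' j')
    then have "odd (j' - i')"
      using G assms(7) unfolding odd_ground_descents_def by simp
    then show ?thesis
      using 3 by simp
  qed
qed

lemma odd_ground_descents_append:
  assumes "dyck p" "dyck q" "p \<noteq> []" "q \<noteq> []"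
  shows "odd_ground_descents (p @ q) \<longleftrightarrow>
    odd_ground_descents p \<and> odd (trailing_downs p) \<and> odd_ground_descents q"
  using odd_ground_descents_appendD[OF assms] odd_ground_descents_appendI[OF assms] by blast

lemma odd_ground_descents_wrap:
  assumes "dyck a"
  shows "odd_ground_descents (True # a @ [False])"
  unfolding odd_ground_descents_def
proof (intro allI impI)
  fix i j
  assume G: "is_ground_descent (True # a @ [False]) i j \<and> j \<noteq> length (True # a @ [False])"
  then have "i < j" "j \<le> length (True # a @ [False])" "height (True # a @ [False]) j = 0"
    using is_descent_bounds unfolding is_ground_descent_def by blast+
  then show "odd (j - i)"
    using height_wrap_pos[OF assms, of j] G by simp
qed

lemma admissible_append:
  assumes "dyck p" "dyck q" "p \<noteq> []" "q \<noteq> []"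
  shows "admissible (p @ q) \<longleftrightarrow>
    odd_ground_descents p \<and> odd (trailing_downs p) \<and> admissible q"
proof -
  have "\<not> last q" "\<not> last (p @ q)"
    using dyck_last[OF assms(2,4)] assms(4) by simp_all
  moreover have "trailing_downs (p @ q) = trailing_downs q"
    using trailing_downs_append[OF dyck_True_in_set[OF assms(2,4)]] .
  ultimately have "even_terminal_descent (p @ q) \<longleftrightarrow> even_terminal_descent q"
    using even_terminal_descent_iff assms(4) by simp
  then show ?thesis
    unfolding admissible_def using odd_ground_descents_append[OF assms] by blast
qed

lemma admissible_wrap: "dyck a \<Longrightarrow> admissible (True # a @ [False]) \<longleftrightarrow> odd (trailing_downs a)"
  unfolding admissible_def
  using odd_ground_descents_wrap even_terminal_descent_iff[of "True # a @ [False]"]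
    trailing_downs_snoc_False[of "True # a"]
  by simp

lemma admissible_wrap_append:
  assumes "dyck a" "dyck r" "r \<noteq> []"
  shows "admissible (True # a @ False # r) \<longleftrightarrow> even (trailing_downs a) \<and> admissible r"
  using admissible_append[OF dyck_wrap[OF assms(1)] assms(2) _ assms(3)]
    odd_ground_descents_wrap[OF assms(1)] trailing_downs_snoc_False[of "True # a"]
  by simp

lemma admissible_even_trailing_downs:
  "dyck p \<Longrightarrow> p \<noteq> [] \<Longrightarrow> admissible p \<Longrightarrow> even (trailing_downs p)"
  unfolding admissible_def using even_terminal_descent_iff dyck_last by blast

section \<open>Deleting the first prime factor\<close>

lemma dyck_split_admissible_suffix:
  assumes "dyck x" "x \<noteq> []" "even (trailing_downs x)"
  shows "\<exists>e r. x = e @ r \<and> dyck e \<and> even (trailing_downs e) \<and> dyck r \<and> r \<noteq> [] \<and> admissible r"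
  using assms
proof (induction "length x" arbitrary: x rule: less_induct)
  case less
  let ?split = "\<lambda>e r. x = e @ r \<and> dyck e \<and> even (trailing_downs e) \<and> dyck r \<and> r \<noteq> [] \<and> admissible r"
  have whole: "?split [] x" if "admissible x"
    using that less.prems by (simp add: trailing_downs_def)
  obtain a y where x: "x = True # a @ False # y" "dyck a" "dyck y"
    using dyck_first_return less.prems(1,2) by blast
  show ?case
  proof (cases "y = []")
    case True
    then have "admissible x"
      using x less.prems(3) admissible_wrap by simp
    then show ?thesis
      using whole by blast
  next
    case False
    have "trailing_downs x = trailing_downs y"
      using x trailing_downs_append[OF dyck_True_in_set[OF x(3) False], of "True # a @ [False]"] by simp
    then obtain e r where er: "y = e @ r" "dyck e" "even (trailing_downs e)" "dyck r" "r \<noteq> []" "admissible r"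
      using less.hyps[of y] x False less.prems(3) by auto
    consider "e = []" "even (trailing_downs a)" | "e = []" "odd (trailing_downs a)" | "e \<noteq> []"
      by blast
    then show ?thesis
    proof cases
      case 1
      then have "admissible x"
        using admissible_wrap_append[OF x(2,3) False] er x by simp
      then show ?thesis
        using whole by blast
    next
      case 2
      then have "?split (True # a @ [False]) r"
        using er x dyck_wrap[OF x(2)] by simp
      then show ?thesis
        by blast
    next
      case 3
      have "trailing_downs (True # a @ False # e) = trailing_downs e"
        using trailing_downs_append[OF dyck_True_in_set[OF er(2) 3], of "True # a @ [False]"] by simp
      then have "?split (True # a @ False # e) r"
        using er x dyck_wrap_append[OF x(2) er(2)] by simp
      then show ?thesis
        by blast
    qed
  qed
qed

definition strip_first_prime :: "bool list \<Rightarrow> bool list" where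
  "strip_first_prime p = (THE q. \<exists>a r. p = True # a @ False # r \<and> dyck a \<and> q = a @ r)"

lemma strip_first_prime_eq: "dyck a \<Longrightarrow> strip_first_prime (True # a @ False # r) = a @ r"
  unfolding strip_first_prime_def
  by (rule the_equality) (use dyck_first_return_unique in blast)+

text \<open>Two admissible preimages of the same path differ by moving a Dyck block u across the first
  return.\<close>

lemma admissible_first_prime_unique:
  assumes "dyck a" "dyck u" "dyck r"
    and "admissible (True # a @ False # u @ r)" "admissible (True # (a @ u) @ False # r)"
  shows "u = []"
proof (rule ccontr)
  assume "u \<noteq> []"
  have "admissible (u @ r)"
    using admissible_wrap_append[OF assms(1) dyck_append[OF assms(2,3)]] \<open>u \<noteq> []\<close> assms(4) by simp
  have tu: "trailing_downs (a @ u) = trailing_downs u"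
    using trailing_downs_append[OF dyck_True_in_set[OF assms(2) \<open>u \<noteq> []\<close>]] .
  show False
  proof (cases "r = []")
    case True
    then show False
      using assms(5) admissible_wrap[OF dyck_append[OF assms(1,2)]] tu
        admissible_even_trailing_downs[OF assms(2) \<open>u \<noteq> []\<close>] \<open>admissible (u @ r)\<close> by simp
  next
    case False
    then show False
      using assms(5) admissible_wrap_append[OF dyck_append[OF assms(1,2)] assms(3)] tu
        admissible_append[OF assms(2,3) \<open>u \<noteq> []\<close>] \<open>admissible (u @ r)\<close> by simp
  qed
qed

lemma inj_on_strip_first_prime:
  "inj_on strip_first_prime {p. dyck p \<and> p \<noteq> [] \<and> admissible p}"
proof (rule inj_onI)
  fix p p'
  assume "p \<in> {p. dyck p \<and> p \<noteq> [] \<and> admissible p}" "p' \<in> {p. dyck p \<and> p \<noteq> [] \<and> admissible p}"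
    and eq: "strip_first_prime p = strip_first_prime p'"
  then have "dyck p" "p \<noteq> []" "dyck p'" "p' \<noteq> []" "admissible p" "admissible p'"
    by auto
  obtain a r where p: "p = True # a @ False # r" "dyck a" "dyck r"
    by (rule dyck_first_return[OF \<open>dyck p\<close> \<open>p \<noteq> []\<close>])
  obtain a' r' where p': "p' = True # a' @ False # r'" "dyck a'" "dyck r'"
    by (rule dyck_first_return[OF \<open>dyck p'\<close> \<open>p' \<noteq> []\<close>])
  have A: "admissible (True # a @ False # r)" "admissible (True # a' @ False # r')"
    using \<open>admissible p\<close> \<open>admissible p'\<close> p p' by simp_all
  have "a @ r = a' @ r'"
    using eq strip_first_prime_eq p p' by simp
  then obtain u where "a' = a @ u \<and> r = u @ r' \<or> a = a' @ u \<and> r' = u @ r"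
    by (auto simp: append_eq_append_conv2)
  then have "a = a' \<and> r = r'"
  proof
    assume "a' = a @ u \<and> r = u @ r'"
    moreover from this have "dyck u"
      using dyck_append_cancel_left p(2) p'(2) by blast
    ultimately show ?thesis
      using admissible_first_prime_unique[OF p(2) _ p'(3)] A by simp
  next
    assume "a = a' @ u \<and> r' = u @ r"
    moreover from this have "dyck u"
      using dyck_append_cancel_left p(2) p'(2) by blast
    ultimately show ?thesis
      using admissible_first_prime_unique[OF p'(2) _ p(3)] A by simp
  qed
  then show "p = p'"
    using p p' by simp
qed

lemma strip_first_prime_image:
  assumes "2 \<le> n"
  shows "strip_first_prime ` A_set n = dyck_paths (n - 1)"
proof safe
  fix p
  assume "p \<in> A_set n"
  then have "dyck p" "length p = 2 * n"
    unfolding A_set_eq by auto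
  moreover have "p \<noteq> []"
    using \<open>length p = 2 * n\<close> assms by auto
  ultimately obtain a r where "p = True # a @ False # r" "dyck a" "dyck r"
    using dyck_first_return by blast
  then show "strip_first_prime p \<in> dyck_paths (n - 1)"
    using strip_first_prime_eq dyck_append \<open>length p = 2 * n\<close>
    unfolding dyck_paths_def dyck_path_iff by simp
next
  fix x
  assume "x \<in> dyck_paths (n - 1)"
  then have x: "dyck x" "length x = 2 * (n - 1)"
    unfolding dyck_paths_def dyck_path_iff by auto
  then have "x \<noteq> []"
    using assms by auto
  show "x \<in> strip_first_prime ` A_set n"
  proof (cases "even (trailing_downs x)")
    case True
    then obtain e r where er: "x = e @ r" "dyck e" "even (trailing_downs e)" "dyck r" "r \<noteq> []" "admissible r"
      using dyck_split_admissible_suffix[OF x(1) \<open>x \<noteq> []\<close>] by blast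
    then have "True # e @ False # r \<in> A_set n"
      using admissible_wrap_append[OF er(2,4,5)] dyck_wrap_append[OF er(2,4)] x(2) assms
      unfolding A_set_eq by simp
    moreover have "strip_first_prime (True # e @ False # r) = x"
      using strip_first_prime_eq[OF er(2)] er(1) by simp
    ultimately show ?thesis
      by (metis image_eqI)
  next
    case False
    then have "True # x @ [False] \<in> A_set n"
      using admissible_wrap[OF x(1)] dyck_wrap[OF x(1)] x(2) assms unfolding A_set_eq by simp
    moreover have "strip_first_prime (True # x @ False # []) = x"
      using strip_first_prime_eq[OF x(1)] by simp
    ultimately show ?thesis
      by (metis image_eqI)
  qed
qed

lemma bij_betw_strip_first_prime:
  assumes "2 \<le> n"
  shows "bij_betw strip_first_prime (A_set n) (dyck_paths (n - 1))"
proof -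
  have "A_set n \<subseteq> {p. dyck p \<and> p \<noteq> [] \<and> admissible p}"
    using assms unfolding A_set_eq by auto
  then show ?thesis
    unfolding bij_betw_def
    using inj_on_subset[OF inj_on_strip_first_prime] strip_first_prime_image[OF assms] by blast
qed

section \<open>Counting Dyck paths by ballot paths\<close>

definition ballot_paths :: "nat \<Rightarrow> nat \<Rightarrow> bool list set" where
  "ballot_paths a b = {w. length (filter (\<lambda>s. s) w) = a \<and> length (filter (\<lambda>s. \<not> s) w) = b \<and>
     (\<forall>k \<le> length w. 0 \<le> height w k)}"

lemma dyck_paths_eq_ballot_paths: "dyck_paths m = ballot_paths m m"
  unfolding dyck_paths_def dyck_path_def ballot_paths_def
  by (auto simp: height_length end_height_eq_count)

lemma length_ballot_paths: "w \<in> ballot_paths a b \<Longrightarrow> length w = a + b"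
  unfolding ballot_paths_def using sum_length_filter_compl[of "\<lambda>s. s" w] by auto

lemma finite_ballot_paths: "finite (ballot_paths a b)"
proof (rule finite_subset)
  show "ballot_paths a b \<subseteq> {w. set w \<subseteq> UNIV \<and> length w = a + b}"
    using length_ballot_paths by auto
qed (rule finite_lists_length_eq, simp)

lemma ballot_paths_0: "ballot_paths a 0 = {replicate a True}"
proof safe
  fix w
  assume w: "w \<in> ballot_paths a 0"
  then have "length w = a" "filter (\<lambda>s. \<not> s) w = []"
    using length_ballot_paths[OF w] unfolding ballot_paths_def by auto
  then show "w = replicate a True"
    by (metis (full_types) filter_empty_conv replicate_length_same)
next
  have "height (replicate a True) k = int (min k a)" for k
    by (simp add: height_eq_end_height_take end_height_def step_val_def sum_list_replicate)
  then show "replicate a True \<in> ballot_paths a 0"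
    unfolding ballot_paths_def by simp
qed

lemma ballot_paths_empty: "a < b \<Longrightarrow> ballot_paths a b = {}"
  unfolding ballot_paths_def by (force simp: height_length end_height_eq_count)

lemma nonneg_heights_snoc:
  "(\<forall>k \<le> length (w @ [c]). 0 \<le> height (w @ [c]) k) \<longleftrightarrow>
   (\<forall>k \<le> length w. 0 \<le> height w k) \<and> 0 \<le> end_height w + step_val c"
proof -
  have "(\<forall>k \<le> length (w @ [c]). 0 \<le> height (w @ [c]) k) \<longleftrightarrow>
        (\<forall>k \<le> length w. 0 \<le> height (w @ [c]) k) \<and> 0 \<le> height (w @ [c]) (Suc (length w))"
    by (auto simp: le_Suc_eq)
  then show ?thesis
    by (simp add: height_append height_Cons)
qed

lemma snoc_True_in_ballot_paths:
  "w @ [True] \<in> ballot_paths a b \<longleftrightarrow> 1 \<le> a \<and> w \<in> ballot_paths (a - 1) b"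
proof -
  have "(\<forall>k \<le> length w. 0 \<le> height w k) \<Longrightarrow> 0 \<le> end_height w"
    by (metis height_length order_refl)
  then show ?thesis
    unfolding ballot_paths_def mem_Collect_eq nonneg_heights_snoc by (auto simp: step_val_def)
qed

lemma snoc_False_in_ballot_paths:
  "w @ [False] \<in> ballot_paths a b \<longleftrightarrow> 1 \<le> b \<and> b \<le> a \<and> w \<in> ballot_paths a (b - 1)"
  unfolding ballot_paths_def mem_Collect_eq nonneg_heights_snoc
  by (auto simp: step_val_def end_height_eq_count)

lemma ballot_paths_snoc_split:
  assumes "1 \<le> b" "b \<le> a"
  shows "ballot_paths a b =
    (\<lambda>w. w @ [True]) ` ballot_paths (a - 1) b \<union> (\<lambda>w. w @ [False]) ` ballot_paths a (b - 1)"
proof (intro equalityI subsetI)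
  fix w
  assume w: "w \<in> ballot_paths a b"
  then have "w \<noteq> []"
    using length_ballot_paths[OF w] assms by auto
  then obtain v c where "w = v @ [c]"
    by (metis rev_exhaust)
  then show "w \<in> (\<lambda>w. w @ [True]) ` ballot_paths (a - 1) b \<union> (\<lambda>w. w @ [False]) ` ballot_paths a (b - 1)"
    using w snoc_True_in_ballot_paths[of v] snoc_False_in_ballot_paths[of v] by (cases c) auto
next
  fix w
  assume "w \<in> (\<lambda>w. w @ [True]) ` ballot_paths (a - 1) b \<union> (\<lambda>w. w @ [False]) ` ballot_paths a (b - 1)"
  then show "w \<in> ballot_paths a b"
    using assms snoc_True_in_ballot_paths snoc_False_in_ballot_paths by auto
qed

lemma card_ballot_paths_rec:
  assumes "1 \<le> b" "b \<le> a"
  shows "card (ballot_paths a b) = card (ballot_paths (a - 1) b) + card (ballot_paths a (b - 1))"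
proof -
  have card_snoc: "card ((\<lambda>w. w @ [c]) ` X) = card X" for c :: bool and X
    by (rule card_image) (simp add: inj_on_def)
  let ?T = "(\<lambda>w. w @ [True]) ` ballot_paths (a - 1) b"
    and ?F = "(\<lambda>w. w @ [False]) ` ballot_paths a (b - 1)"
  have "card (?T \<union> ?F) = card ?T + card ?F"
    by (rule card_Un_disjoint) (auto simp: finite_ballot_paths)
  then show ?thesis
    unfolding ballot_paths_snoc_split[OF assms] card_snoc .
qed

text \<open>The ballot number binom(a+b, b) - binom(a+b, a+1), stated additively to avoid truncated
  subtraction.\<close>

lemma card_ballot_paths:
  "b \<le> a + 1 \<Longrightarrow> card (ballot_paths a b) + ((a + b) choose (a + 1)) = (a + b) choose b"
proof (induction "a + b" arbitrary: a b rule: less_induct)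
  case less
  consider "b = 0" | "b = a + 1" | "1 \<le> b" "b \<le> a"
    using less.prems by linarith
  then show ?case
  proof cases
    case 1
    then show ?thesis
      by (simp add: ballot_paths_0)
  next
    case 2
    then show ?thesis
      by (simp add: ballot_paths_empty)
  next
    case 3
    then obtain n k where nk: "a + b = Suc n" "b = Suc k"
      by (metis add_Suc_right not0_implies_Suc not_one_le_zero)
    have "card (ballot_paths (a - 1) b) + (n choose a) = n choose b"
      using less.hyps[of "a - 1" b] 3 nk by simp
    moreover have "card (ballot_paths a k) + (n choose Suc a) = n choose k"
      using less.hyps[of a k] 3 nk by simp
    ultimately show ?thesis
      using card_ballot_paths_rec[OF 3] nk by simp
  qed
qed

lemma card_dyck_paths: "card (dyck_paths m) = catalan m"
proof -
  have "Suc m * ((2 * m) choose Suc m) = (2 * m) * ((2 * m - 1) choose m)"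
    by (rule binomial_absorption)
  also have "\<dots> = (2 * m - m) * ((2 * m) choose m)"
    by (rule binomial_absorb_comp[symmetric])
  finally have absorb: "Suc m * ((2 * m) choose Suc m) = m * ((2 * m) choose m)"
    by simp
  have "card (dyck_paths m) + ((2 * m) choose Suc m) = (2 * m) choose m"
    using card_ballot_paths[of m m] by (simp add: dyck_paths_eq_ballot_paths mult_2)
  then have "Suc m * (card (dyck_paths m) + ((2 * m) choose Suc m)) = Suc m * ((2 * m) choose m)"
    by simp
  then have C: "(2 * m) choose m = Suc m * card (dyck_paths m)"
    unfolding add_mult_distrib2 absorb by simp
  show ?thesis
    unfolding catalan_def Suc_eq_plus1[symmetric] C
    by (simp only: div_mult_self1_is_m[OF zero_less_Suc])
qed

theorem theorem1:
  fixes n :: nat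
  assumes "n \<ge> 2"
  shows "card (A_set n) = catalan (n - 1)"
  using bij_betw_same_card[OF bij_betw_strip_first_prime[OF assms]] card_dyck_paths by simp

end
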